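(* Consider stochastic ORBCD as described in the context with $\eta_t = \sqrt{t} + L$, where $L=\max_jL_j$, with $i_t$ and $j_t$ sampled independently and uniformly from $\{1,\dots,I\}$ and $\{1,\dots,J\}$ respectively, and let $\bar{\mathbf{x}}^T = \frac{1}{T}\sum_{t=1}^T \mathbf{x}^t$. Suppose the block-wise Lipschitz assumption and the boundedness assumption hold. Then for every $\mathbf{x}\in\mathbb{R}^n$, \[ \mathbb{E}_{\xi}[f(\bar{\mathbf{x}}^T) + g(\bar{\mathbf{x}}^T)] - [f(\mathbf{x}) + g(\mathbf{x})] \le \frac{J\big( \frac{\sqrt{T} + L}{2}D^2 + \sqrt{T}R_f^2 + g(\mathbf{x}^1) - g(\mathbf{x}^* )\big)}{T}. \]
   Context: Problem: minimize $f(\mathbf{x})+g(\mathbf{x})$ with $f=\frac1I\sum_{i=1}^I f_i$, each $f_i:\mathbb{R}^n\to\mathbb{R}$ convex and differentiable, and $g(\mathbf{x})=\sum_{j=1}^J g_j(\mathbf{x}_j)$ with each $g_j$ convex; the minimum is attained at $\mathbf{x}^*$. Here $\mathbf{x}$ is partitioned into $J$ non-overlapping blocks $\mathbf{x}_j\in\mathbb{R}^{n_j}$, $U_j\in\mathbb{R}^{n\times n_j}$ are the corresponding columns of an $n\times n$ permutation matrix, $\mathbf{x}=\sum_jU_j\mathbf{x}_j$, $\mathbf{x}_j=U_j^T\mathbf{x}$, $\nabla_j f=U_j^T\nabla f$. ORBCD (stochastic): $\mathbf{x}^1=\mathbf{0}$; at iteration $t$, pick $i_t$ and $j_t$, set $\mathbf{x}_{j_t}^{t+1}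 = \arg\min_{\mathbf{x}_{j_t}} \langle \nabla_{j_t} f_{i_t}(\mathbf{x}^t), \mathbf{x}_{j_t}\rangle + g_{j_t}(\mathbf{x}_{j_t}) + \frac{\eta_t}{2}\|\mathbf{x}_{j_t}-\mathbf{x}^t_{j_t}\|_2^2$ and $\mathbf{x}^{t+1} = \mathbf{x}^t + U_{j_t}(\mathbf{x}^{t+1}_{j_t}-\mathbf{x}^t_{j_t})$. $\xi=\{(i_1,j_1),\dots,(i_{t-1},j_{t-1})\}$ denotes the history of random choices. Block-wise Lipschitz assumption: $\|\nabla_j f_i(\mathbf{x}+U_jh_j)-\nabla_j f_i(\mathbf{x})\|_2\le L_j\|h_j\|_2\le L\|h_j\|_2$ for all $i,j,\mathbf{x},h_j$, $L=\max_jL_j$. Boundedness assumption: $\|\nabla f_i(\mathbf{x}^t)\|_2\le R_f$ for all $i,t$, and all iterates lie in a set $\mathcal{X}$ of diameter $D$. *)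

theory Defs
  imports "HOL-Analysis.Analysis" "HOL-Probability.Probability"
begin

text \<open>Coordinates of R^n are indexed by a finite type 'n. Block j is the index set blk j.
  The block component of a vector, embedded back into R^n (i.e. U_j U_j^T v).\<close>
definition blk_proj :: "'n set \<Rightarrow> real^'n \<Rightarrow> real^'n" where
  "blk_proj B v = (\<chi> k. if k \<in> B then v $ k else 0)"

text \<open>One ORBCD update with step parameter eta, current iterate x and choice (i,j):
  minimize over the block j (all other coordinates kept equal to those of x)
  <grad_j f_i(x), y_j> + g_j(y_j) + eta/2 * ||y_j - x_j||^2.
  Here g j :: real^'n => real is assumed (in the theorem) to depend only on block j.\<close>
definition orbcd_step ::
  "(nat \<Rightarrow> real^'n \<Rightarrow> real^'n) \<Rightarrow> (nat \<Rightarrow> real^'n \<Rightarrow> real) \<Rightarrow> (nat \<Rightarrow> 'n set)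
    \<Rightarrow> real \<Rightarrow> real^'n \<Rightarrow> nat \<times> nat \<Rightarrow> real^'n" where
  "orbcd_step gf g blk eta x ij = (case ij of (i, j) \<Rightarrow>
     arg_min (\<lambda>y. blk_proj (blk j) (gf i x) \<bullet> y + g j y + eta / 2 * (norm (y - x))\<^sup>2)
             (\<lambda>y. \<forall>k. k \<notin> blk j \<longrightarrow> y $ k = x $ k))"

text \<open>orbcd_iter ... h k is the iterate x^(k+1); h k is the choice (i_(k+1), j_(k+1));
  the step size at iteration t = k+1 is eta_t = sqrt t + L.\<close>
primrec orbcd_iter ::
  "(nat \<Rightarrow> real^'n \<Rightarrow> real^'n) \<Rightarrow> (nat \<Rightarrow> real^'n \<Rightarrow> real) \<Rightarrow> (nat \<Rightarrow> 'n set) \<Rightarrow> real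
    \<Rightarrow> (nat \<Rightarrow> nat \<times> nat) \<Rightarrow> nat \<Rightarrow> real^'n" where
  "orbcd_iter gf g blk L h 0 = 0"
| "orbcd_iter gf g blk L h (Suc k) =
     orbcd_step gf g blk (sqrt (real (Suc k)) + L) (orbcd_iter gf g blk L h k) (h k)"

end

theory Submission
  imports Defs
begin

text \<open>
  An ORBCD step is a proximal step of \<open>g\<^sub>j\<close> on block \<open>j\<close> for the linearization of \<open>f\<^sub>i\<close>.
  Its three-point inequality, Young's inequality for the linear term and the gradient inequality
  for the convex \<open>f\<^sub>i\<close> give, averaged over the uniformly drawn pair \<open>(i, j)\<close>, the descent estimate
  \<open>E[F(x\<^sup>t)] - F(x\<^sup>*) \<le> J E[g(x\<^sup>t) - g(x\<^sup>t\<^sup>+\<^sup>1)] + J\<eta>\<^sub>t/2 E[\<parallel>x\<^sup>* - x\<^sup>t\<parallel>\<^sup>2 - \<parallel>x\<^sup>* - x\<^sup>t\<^sup>+\<^sup>1\<parallel>\<^sup>2] + R\<^sub>f\<^sup>2/(2\<eta>\<^sub>t)\<close>.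
  Summed over \<open>t\<close>, the regularizer telescopes, the distances telescope against the increasing
  \<open>\<eta>\<^sub>t\<close> to at most \<open>\<eta>\<^sub>T D\<^sup>2/2\<close>, and \<open>\<Sum> 1/(2\<surd>t) \<le> \<surd>T - 1/2\<close>. The average involves \<open>T\<close> iterates but
  only \<open>T - 1\<close> random steps; the gap of the last iterate is at most \<open>J R\<^sub>f \<parallel>x\<^sup>* - x\<^sup>T\<parallel>\<close> by the
  gradient bound and is absorbed by AM-GM. Jensen's inequality moves the average inside \<open>F\<close>, and
  \<open>F(x\<^sup>*) \<le> F(x)\<close> gives the claim for every \<open>x\<close>.
\<close>

section \<open>Finite product distributions\<close>

lemma expectation_finite_pmf:
  assumes "finite (set_pmf M)"
  shows "measure_pmf.expectation M (f :: _ \<Rightarrow> real) = (\<Sum>a\<in>set_pmf M. pmf M a * f a)"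
  using assms by (subst integral_measure_pmf[of "set_pmf M"]) auto

lemma expectation_pair_pmf_swap:
  assumes "finite (set_pmf p)" "finite (set_pmf q)"
  shows "measure_pmf.expectation (pair_pmf p q) (R :: _ \<Rightarrow> real)
       = measure_pmf.expectation q (\<lambda>b. measure_pmf.expectation p (\<lambda>a. R (a, b)))"
proof -
  have "measure_pmf.expectation (pair_pmf p q) R
      = (\<Sum>a\<in>set_pmf p. \<Sum>b\<in>set_pmf q. pmf p a * pmf q b * R (a, b))"
    using assms unfolding sum.cartesian_product
    by (subst expectation_finite_pmf) (auto intro!: sum.cong simp: pmf_pair)
  also have "\<dots> = (\<Sum>b\<in>set_pmf q. pmf q b * (\<Sum>a\<in>set_pmf p. pmf p a * R (a, b)))"
    by (subst sum.swap) (simp add: sum_distrib_left algebra_simps)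
  finally show ?thesis
    using assms by (simp add: expectation_finite_pmf)
qed

lemma finite_set_Pi_pmf:
  assumes "finite A" "\<And>x. x \<in> A \<Longrightarrow> finite (set_pmf (p x))"
  shows "finite (set_pmf (Pi_pmf A d p))"
  using assms by (subst set_Pi_pmf) (auto intro!: finite_PiE_dflt)

lemma expectation_Pi_pmf_resample:
  assumes "finite A" "t \<in> A" and fin: "\<And>x. x \<in> A \<Longrightarrow> finite (set_pmf (p x))"
  shows "measure_pmf.expectation (Pi_pmf A d p) (Q :: _ \<Rightarrow> real)
       = measure_pmf.expectation (Pi_pmf A d p) (\<lambda>h. measure_pmf.expectation (p t) (\<lambda>y. Q (h(t := y))))"
proof -
  let ?M = "pair_pmf (p t) (Pi_pmf (A - {t}) d p)"
  have split: "Pi_pmf A d p = map_pmf (\<lambda>(y, h). h(t := y)) ?M"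
    using assms Pi_pmf_insert[of "A - {t}" t d p] by (simp add: insert_absorb)
  have "finite (set_pmf (p t))" "finite (set_pmf (Pi_pmf (A - {t}) d p))"
    using assms by (auto intro!: finite_set_Pi_pmf)
  then have "measure_pmf.expectation ?M (\<lambda>x. Q ((snd x)(t := fst x)))
      = measure_pmf.expectation (Pi_pmf (A - {t}) d p)
          (\<lambda>h. measure_pmf.expectation (p t) (\<lambda>y. Q (h(t := y))))"
    by (subst expectation_pair_pmf_swap) auto
  also have "\<dots> = measure_pmf.expectation ?M
      (\<lambda>x. (\<lambda>h. measure_pmf.expectation (p t) (\<lambda>y. Q (h(t := y)))) (snd x))"
    by (rule expectation_pair_pmf_snd[symmetric])
  finally show ?thesis
    unfolding split by (simp add: case_prod_beta)
qed

lemma expectation_Pi_pmf_nonpos_by_resampling: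
  assumes "finite A" "t \<in> A" "finite S" "S \<noteq> {}"
    and "\<And>h. h \<in> set_pmf (Pi_pmf A d (\<lambda>_. pmf_of_set S)) \<Longrightarrow> (\<Sum>y\<in>S. Q (h(t := y))) \<le> (0 :: real)"
  shows "measure_pmf.expectation (Pi_pmf A d (\<lambda>_. pmf_of_set S)) Q \<le> 0"
proof -
  have fin: "finite (set_pmf (Pi_pmf A d (\<lambda>_. pmf_of_set S)))"
    using assms by (intro finite_set_Pi_pmf) auto
  have "measure_pmf.expectation (Pi_pmf A d (\<lambda>_. pmf_of_set S)) Q
      = measure_pmf.expectation (Pi_pmf A d (\<lambda>_. pmf_of_set S)) (\<lambda>h. (\<Sum>y\<in>S. Q (h(t := y))) / card S)"
    using assms by (subst expectation_Pi_pmf_resample[of A t]) (auto simp: integral_pmf_of_set)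
  also have "\<dots> \<le> 0"
    unfolding expectation_finite_pmf[OF fin]
    using assms by (intro sum_nonpos mult_nonneg_nonpos) (auto intro: divide_nonpos_nonneg)
  finally show ?thesis .
qed

section \<open>Convex analysis\<close>

lemma norm_add_square:
  fixes u v :: "'a::real_inner"
  shows "(norm (u + v))\<^sup>2 = (norm u)\<^sup>2 + 2 * (u \<bullet> v) + (norm v)\<^sup>2"
  by (simp add: power2_norm_eq_inner inner_add_left inner_add_right inner_commute)

lemma young_inner_le:
  fixes c v :: "'a::real_inner"
  assumes "\<eta> > 0"
  shows "c \<bullet> v \<le> (norm c)\<^sup>2 / (2 * \<eta>) + \<eta>/2 * (norm v)\<^sup>2"
proof -
  have "0 \<le> (norm (c - \<eta> *\<^sub>R v))\<^sup>2"
    by simp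
  also have "\<dots> = (norm c)\<^sup>2 - 2 * \<eta> * (c \<bullet> v) + \<eta>\<^sup>2 * (norm v)\<^sup>2"
    using norm_add_square[of c "- (\<eta> *\<^sub>R v)"] by (simp add: power_mult_distrib)
  finally show ?thesis
    using assms by (simp add: field_simps power2_eq_square)
qed

lemma convex_on_gradient_inequality:
  fixes F :: "'a::real_normed_vector \<Rightarrow> real"
  assumes cvx: "convex_on UNIV F" and deriv: "(F has_derivative F') (at z)"
  shows "F z + F' (x - z) \<le> F x"
proof -
  define \<phi> where "\<phi> s = F (z + s *\<^sub>R (x - z))" for s :: real
  have "convex_on UNIV \<phi>"
  proof (rule convex_onI[OF _ convex_UNIV])
    fix t a b :: real assume "0 < t" "t < 1"
    have "z + ((1 - t) *\<^sub>R a + t *\<^sub>R b) *\<^sub>R (x - z)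
        = (1 - t) *\<^sub>R (z + a *\<^sub>R (x - z)) + t *\<^sub>R (z + b *\<^sub>R (x - z))"
      by (simp add: algebra_simps)
    then show "\<phi> ((1 - t) *\<^sub>R a + t *\<^sub>R b) \<le> (1 - t) * \<phi> a + t * \<phi> b"
      unfolding \<phi>_def using convex_onD[OF cvx, of t] \<open>0 < t\<close> \<open>t < 1\<close> by auto
  qed
  moreover have "(\<phi> has_real_derivative F' (x - z)) (at 0)"
  proof -
    have "((\<lambda>s. z + s *\<^sub>R (x - z)) has_derivative (\<lambda>s. s *\<^sub>R (x - z))) (at 0)"
      by (auto intro!: derivative_eq_intros)
    from has_derivative_compose[OF this] deriv
    have "(\<phi> has_derivative (\<lambda>s. F' (s *\<^sub>R (x - z)))) (at 0)"
      unfolding \<phi>_def by (simp add: o_def)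
    moreover have "(\<lambda>s. F' (s *\<^sub>R (x - z))) = (*) (F' (x - z))"
      using linear_cmul[OF bounded_linear.linear[OF has_derivative_bounded_linear[OF deriv]]]
      by (simp add: fun_eq_iff)
    ultimately show ?thesis
      by (simp add: has_field_derivative_def)
  qed
  ultimately have "F' (x - z) * (1 - 0) \<le> \<phi> 1 - \<phi> 0"
    by (intro convex_on_imp_above_tangent) auto
  then show ?thesis
    by (simp add: \<phi>_def)
qed

lemma convex_on_inner_add:
  assumes "convex_on UNIV h"
  shows "convex_on UNIV (\<lambda>y. a \<bullet> y + h y)"
proof -
  have "convex_on UNIV (\<lambda>y. a \<bullet> y)"
    by (rule convex_onI) (auto simp: inner_add_right)
  then show ?thesis
    using assms by (rule convex_on_add)
qed

lemma convex_on_sum_fun: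
  assumes "finite A" "convex S" "\<And>a. a \<in> A \<Longrightarrow> convex_on S (F a)"
  shows "convex_on S (\<lambda>x. \<Sum>a\<in>A. F a x)"
  using assms by (induction A rule: finite_induct) (auto simp: convex_on_const)

lemma convex_on_average_le:
  fixes \<phi> :: "'a::real_vector \<Rightarrow> real"
  assumes "convex_on UNIV \<phi>" "T \<ge> 1"
  shows "\<phi> ((1 / real T) *\<^sub>R (\<Sum>k<T. x k)) \<le> (1 / real T) * (\<Sum>k<T. \<phi> (x k))"
proof -
  have "{..<T} \<noteq> {}"
    using assms(2) by (auto simp: lessThan_empty_iff)
  then show ?thesis
    using convex_on_sum[OF _ _ assms(1), of "{..<T}" "\<lambda>_. 1 / real T" x] assms(2)
    by (simp add: scaleR_sum_right sum_distrib_left)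
qed

lemma convex_on_linear_lower_bound:
  fixes h :: "'a::euclidean_space \<Rightarrow> real"
  assumes cvx: "convex_on UNIV h" and "closed S" "convex S" "z \<in> S"
  obtains c where "c \<ge> 0" "\<And>y. y \<in> S \<Longrightarrow> 1 \<le> norm (y - z) \<Longrightarrow> h z - c * norm (y - z) \<le> h y"
proof -
  have "compact (cball z 1 \<inter> S)" "z \<in> cball z 1 \<inter> S"
    using assms by (auto intro: compact_Int_closed)
  moreover have "continuous_on (cball z 1 \<inter> S) h"
    using convex_on_continuous[OF open_UNIV cvx] continuous_on_subset by blast
  ultimately obtain u0 where u0: "u0 \<in> cball z 1 \<inter> S" "\<And>u. u \<in> cball z 1 \<inter> S \<Longrightarrow> h u0 \<le> h u"
    by (metis continuous_attains_inf empty_iff)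
  show ?thesis
  proof
    show "0 \<le> h z - h u0"
      using u0 \<open>z \<in> S\<close> by auto
  next
    fix y assume y: "y \<in> S" and r: "1 \<le> norm (y - z)"
    define r where "r = norm (y - z)"
    define u where "u = (1 - 1/r) *\<^sub>R z + (1/r) *\<^sub>R y"
    have "norm (u - z) = 1"
    proof -
      have "u - z = (1/r) *\<^sub>R (y - z)" by (simp add: u_def algebra_simps)
      then show ?thesis using r by (simp add: r_def del: norm_eq_zero)
    qed
    moreover have "u \<in> S"
      unfolding u_def using r y \<open>z \<in> S\<close> \<open>convex S\<close> by (intro convexD) (auto simp: r_def divide_le_eq_1)
    ultimately have "h u0 \<le> h u"
      using u0 by (simp add: dist_norm norm_minus_commute)
    also have "h u \<le> (1 - 1/r) * h z + (1/r) * h y"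
      unfolding u_def using r convex_onD[OF cvx, of "1/r" z y] by (simp add: r_def divide_le_eq_1)
    finally have "r * h u0 \<le> r * ((1 - 1/r) * h z + (1/r) * h y)"
      using r by (intro mult_left_mono) (auto simp: r_def)
    also have "\<dots> = (r - 1) * h z + h y"
      using r by (simp add: r_def field_simps)
    finally have "r * h u0 \<le> (r - 1) * h z + h y" .
    then show "h z - (h z - h u0) * norm (y - z) \<le> h y"
      by (simp add: r_def algebra_simps)
  qed
qed

lemma prox_minimizer_exists:
  fixes h :: "'a::euclidean_space \<Rightarrow> real"
  assumes cvx: "convex_on UNIV h" and "closed S" "convex S" "z \<in> S" "\<eta> > 0"
  shows "\<exists>m\<in>S. \<forall>y\<in>S. h m + \<eta>/2 * (norm (m - z))\<^sup>2 \<le> h y + \<eta>/2 * (norm (y - z))\<^sup>2"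
proof -
  define \<Phi> where "\<Phi> y = h y + \<eta>/2 * (norm (y - z))\<^sup>2" for y
  obtain c where "c \<ge> 0" and lower: "\<And>y. y \<in> S \<Longrightarrow> 1 \<le> norm (y - z) \<Longrightarrow> h z - c * norm (y - z) \<le> h y"
    using convex_on_linear_lower_bound[OF assms(1-4)] by blast
  define R where "R = max 1 (2 * c / \<eta>)"
  have "compact (cball z R \<inter> S)" and zK: "z \<in> cball z R \<inter> S"
    using assms by (auto intro: compact_Int_closed simp: R_def)
  moreover have "continuous_on (cball z R \<inter> S) \<Phi>"
    unfolding \<Phi>_def using convex_on_continuous[OF open_UNIV cvx]
    by (auto intro!: continuous_intros intro: continuous_on_subset)
  ultimately obtain m where m: "m \<in> cball z R \<inter> S" "\<And>u. u \<in> cball z R \<inter> S \<Longrightarrow> \<Phi> m \<le> \<Phi> u"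
    by (metis continuous_attains_inf empty_iff)
  have "\<Phi> m \<le> \<Phi> y" if "y \<in> S" for y
  proof (cases "norm (y - z) \<le> R")
    case True
    then show ?thesis using m that by (simp add: dist_norm norm_minus_commute)
  next
    case False
    define r where "r = norm (y - z)"
    have r: "1 \<le> r" "2 * c \<le> \<eta> * r"
      using False \<open>\<eta> > 0\<close> by (auto simp: r_def R_def pos_divide_less_eq mult.commute not_le)
    then have "c * r \<le> \<eta>/2 * r\<^sup>2"
      using mult_right_mono[OF r(2), of r] by (simp add: power2_eq_square)
    with lower[OF that] r have "\<Phi> z \<le> \<Phi> y"
      by (simp add: \<Phi>_def r_def)
    then show ?thesis
      using m(2)[OF zK] by simp
  qed
  then show ?thesis
    using m(1) unfolding \<Phi>_def by blast
qed

lemma nonneg_if_nonneg_perturbations: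
  fixes A B :: real
  assumes "B \<ge> 0" and perturbed: "\<And>s. 0 < s \<Longrightarrow> s \<le> 1 \<Longrightarrow> 0 \<le> A + s * B"
  shows "0 \<le> A"
proof (rule field_le_epsilon)
  fix e :: real assume "e > 0"
  define s where "s = min 1 (e / (B + 1))"
  have "0 < s" "s \<le> 1"
    using \<open>e > 0\<close> \<open>B \<ge> 0\<close> by (auto simp: s_def)
  have "s * B \<le> e / (B + 1) * B"
    using \<open>B \<ge> 0\<close> by (intro mult_right_mono) (auto simp: s_def)
  also have "\<dots> = e * (B / (B + 1))"
    by simp
  also have "\<dots> \<le> e"
    using \<open>e > 0\<close> \<open>B \<ge> 0\<close> by (intro mult_left_le) auto
  finally show "0 \<le> A + e"
    using perturbed[OF \<open>0 < s\<close> \<open>s \<le> 1\<close>] by linarith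
qed

text \<open>The quadratic term makes the proximal objective strongly convex; testing minimality
  along the segment from \<open>m\<close> to \<open>w\<close> and letting the step shrink yields the extra term.\<close>
lemma prox_three_point:
  fixes h :: "'a::real_inner \<Rightarrow> real"
  assumes cvx: "convex_on S h" and "m \<in> S" "w \<in> S" "\<eta> \<ge> 0"
    and min: "\<And>y. y \<in> S \<Longrightarrow> h m + \<eta>/2 * (norm (m - z))\<^sup>2 \<le> h y + \<eta>/2 * (norm (y - z))\<^sup>2"
  shows "h m + \<eta>/2 * (norm (m - z))\<^sup>2 + \<eta>/2 * (norm (w - m))\<^sup>2 \<le> h w + \<eta>/2 * (norm (w - z))\<^sup>2"
proof -
  define a where "a = (m - z) \<bullet> (w - m)"
  define b where "b = (norm (w - m))\<^sup>2"
  have perturbed: "0 \<le> h w - h m + \<eta> * a + s * (\<eta> * b / 2)" if s: "0 < s" "s \<le> 1" for s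
  proof -
    define p where "p = m + s *\<^sub>R (w - m)"
    have "p = (1 - s) *\<^sub>R m + s *\<^sub>R w"
      by (simp add: p_def algebra_simps)
    then have "p \<in> S" and hp: "h p \<le> (1 - s) * h m + s * h w"
      using convex_onD[OF cvx, of s m w] convex_on_imp_convex[OF cvx] \<open>m \<in> S\<close> \<open>w \<in> S\<close> s
      by (auto intro: convexD)
    have pz: "p - z = (m - z) + s *\<^sub>R (w - m)"
      by (simp add: p_def algebra_simps)
    have "(norm (p - z))\<^sup>2 = (norm (m - z))\<^sup>2 + 2 * s * a + s\<^sup>2 * b"
      unfolding pz norm_add_square by (simp add: a_def b_def power_mult_distrib)
    then have "\<eta>/2 * (norm (p - z))\<^sup>2 = \<eta>/2 * (norm (m - z))\<^sup>2 + s * (\<eta> * a + s * (\<eta> * b / 2))"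
      by (simp add: power2_eq_square field_simps)
    moreover have "(1 - s) * h m = h m - s * h m"
      by (simp add: algebra_simps)
    ultimately have "0 \<le> s * h w - s * h m + s * (\<eta> * a + s * (\<eta> * b / 2))"
      using min[OF \<open>p \<in> S\<close>] hp by linarith
    then have "0 \<le> s * (h w - h m + \<eta> * a + s * (\<eta> * b / 2))"
      by (simp only: distrib_left right_diff_distrib)
    then show ?thesis
      using s by (simp add: zero_le_mult_iff)
  qed
  have "0 \<le> h w - h m + \<eta> * a"
    by (rule nonneg_if_nonneg_perturbations[OF _ perturbed]) (simp_all add: b_def \<open>\<eta> \<ge> 0\<close>)
  moreover have "(norm (w - z))\<^sup>2 = (norm (m - z))\<^sup>2 + 2 * a + b"
    using norm_add_square[of "m - z" "w - m"] by (simp add: a_def b_def)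
  then have "\<eta>/2 * (norm (w - z))\<^sup>2 = \<eta>/2 * (norm (m - z))\<^sup>2 + \<eta> * a + \<eta>/2 * b"
    by (simp add: field_simps)
  ultimately show ?thesis
    unfolding b_def[symmetric] by linarith
qed

section \<open>The step-size schedule\<close>

lemma sum_weighted_telescope_le:
  fixes w d :: "nat \<Rightarrow> real"
  assumes "\<And>k. w k \<le> w (Suc k)" "w 0 \<ge> 0"
    and "\<And>k. k \<le> Suc m \<Longrightarrow> 0 \<le> d k" "\<And>k. k \<le> Suc m \<Longrightarrow> d k \<le> M"
  shows "(\<Sum>k<Suc m. w k * (d k - d (Suc k))) \<le> w m * (M - d (Suc m))"
  using assms(3,4)
proof (induction m)
  case 0
  show ?case
    using assms(2) 0 mult_left_mono[of "d 0" M "w 0"] by (simp add: algebra_simps)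
next
  case (Suc m)
  have "(w (Suc m) - w m) * d (Suc m) \<le> (w (Suc m) - w m) * M"
    using assms(1) Suc.prems by (intro mult_left_mono) auto
  with Suc show ?case
    by (simp add: algebra_simps)
qed

lemma sum_inverse_sqrt_le: "(\<Sum>k<Suc m. 1 / (2 * sqrt (real (Suc k)))) \<le> sqrt (real (Suc m)) - 1/2"
proof (induction m)
  case (Suc m)
  define a where "a = sqrt (real (Suc m))"
  define b where "b = sqrt (real (Suc (Suc m)))"
  have "0 < a" "a \<le> b" "(b - a) * (b + a) = 1"
    by (simp_all add: a_def b_def algebra_simps)
  then have "b - a = 1 / (b + a)"
    by (simp add: field_simps)
  also have "1 / (2 * b) \<le> 1 / (b + a)"
    using \<open>0 < a\<close> \<open>a \<le> b\<close> by (intro divide_left_mono) auto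
  finally have "1 / (2 * b) \<le> b - a" .
  with Suc show ?case
    by (simp add: a_def b_def)
qed simp

lemma sum_inverse_step_le:
  assumes "L \<ge> 0"
  shows "(\<Sum>k<Suc n. 1 / (2 * (sqrt (real (Suc k)) + L))) \<le> sqrt (real (Suc n)) - 1/2"
proof -
  have "1 / (2 * (sqrt (real (Suc k)) + L)) \<le> 1 / (2 * sqrt (real (Suc k)))" for k
    using assms by (intro divide_left_mono) (auto intro!: mult_pos_pos add_pos_nonneg)
  then have "(\<Sum>k<Suc n. 1 / (2 * (sqrt (real (Suc k)) + L))) \<le> (\<Sum>k<Suc n. 1 / (2 * sqrt (real (Suc k))))"
    by (intro sum_mono)
  also have "\<dots> \<le> sqrt (real (Suc n)) - 1/2"
    by (rule sum_inverse_sqrt_le)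
  finally show ?thesis .
qed

lemma half_plus_sqrt_le:
  fixes J :: real
  assumes "J \<ge> 1"
  shows "J / 2 + sqrt (real m) - 1/2 \<le> J * sqrt (real (Suc m))"
proof -
  have "1 \<le> sqrt (real (Suc m))"
    by simp
  then have "0 \<le> (J - 1) * (sqrt (real (Suc m)) - 1/2)"
    using assms by (intro mult_nonneg_nonneg) linarith+
  moreover have "(J - 1) * (sqrt (real (Suc m)) - 1/2) = J * sqrt (real (Suc m)) - J/2 - sqrt (real (Suc m)) + 1/2"
    by (simp add: field_simps)
  moreover have "sqrt (real m) \<le> sqrt (real (Suc m))"
    by simp
  ultimately show ?thesis
    by linarith
qed

text \<open>The deterministic part of the rate for the step parameters \<open>\<eta>\<^sub>k = \<surd>(k + 1) + L\<close>:
  \<open>\<delta>\<^sub>k\<close> will be the distance of the \<open>k\<close>-th iterate to the minimizer, and \<open>R \<delta>\<^sub>m\<close> bounds the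
  gap of the last iterate, for which no step is taken.\<close>
lemma sqrt_step_schedule_bound:
  fixes \<delta> :: "nat \<Rightarrow> real" and J :: real
  assumes "L \<ge> 0" "R \<ge> 0" "J \<ge> 1" "\<And>k. k \<le> m \<Longrightarrow> 0 \<le> \<delta> k" "\<And>k. k \<le> m \<Longrightarrow> \<delta> k \<le> D"
  defines "\<eta> k \<equiv> sqrt (real (Suc k)) + L"
  shows "J * R * \<delta> m + J/2 * (\<Sum>k<m. \<eta> k * ((\<delta> k)\<^sup>2 - (\<delta> (Suc k))\<^sup>2)) + R\<^sup>2 * (\<Sum>k<m. 1 / (2 * \<eta> k))
           \<le> J * ((sqrt (real (Suc m)) + L) / 2 * D\<^sup>2 + sqrt (real (Suc m)) * R\<^sup>2)"
proof (cases m)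
  case 0
  have "R * \<delta> 0 \<le> (R\<^sup>2 + D\<^sup>2) / 2"
    using sum_squares_bound[of R "\<delta> 0"] power_mono[OF assms(5) assms(4), of 0 2] 0 by simp
  also have "\<dots> \<le> (1 + L) / 2 * D\<^sup>2 + R\<^sup>2"
    using \<open>L \<ge> 0\<close> by (simp add: field_simps)
  finally show ?thesis
    using mult_left_mono[of _ _ J] \<open>J \<ge> 1\<close> 0 by (simp add: mult.assoc)
next
  case (Suc n)
  define e where "e = \<eta> n"
  have "1 \<le> sqrt (real (Suc n))"
    by simp
  then have "1 \<le> e"
    using \<open>L \<ge> 0\<close> unfolding e_def \<eta>_def by linarith
  have "e \<le> sqrt (real (Suc m)) + L"
    by (simp add: e_def \<eta>_def Suc)
  have telescope: "(\<Sum>k<m. \<eta> k * ((\<delta> k)\<^sup>2 - (\<delta> (Suc k))\<^sup>2)) \<le> e * (D\<^sup>2 - (\<delta> m)\<^sup>2)"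
    unfolding Suc e_def
    using assms(4,5) \<open>L \<ge> 0\<close> by (intro sum_weighted_telescope_le) (auto simp: \<eta>_def Suc intro: power_mono)
  have "R * \<delta> m \<le> (R\<^sup>2 + (\<delta> m)\<^sup>2) / 2" "(\<delta> m)\<^sup>2 \<le> e * (\<delta> m)\<^sup>2"
    using sum_squares_bound[of R "\<delta> m"] \<open>1 \<le> e\<close> by (simp_all add: mult_le_cancel_right1)
  then have last: "R * \<delta> m - e * (\<delta> m)\<^sup>2 / 2 \<le> R\<^sup>2 / 2"
    by simp
  have "J * R * \<delta> m + J/2 * (\<Sum>k<m. \<eta> k * ((\<delta> k)\<^sup>2 - (\<delta> (Suc k))\<^sup>2)) + R\<^sup>2 * (\<Sum>k<m. 1 / (2 * \<eta> k))
      \<le> J * R * \<delta> m + J/2 * (e * (D\<^sup>2 - (\<delta> m)\<^sup>2)) + R\<^sup>2 * (sqrt (real m) - 1/2)"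
    using \<open>J \<ge> 1\<close> telescope sum_inverse_step_le[OF \<open>L \<ge> 0\<close>, of n]
    by (intro add_mono mult_left_mono order_refl) (auto simp: \<eta>_def Suc)
  also have "\<dots> = J * (R * \<delta> m - e * (\<delta> m)\<^sup>2 / 2) + J * (e / 2 * D\<^sup>2) + R\<^sup>2 * (sqrt (real m) - 1/2)"
    by (simp add: algebra_simps)
  also have "\<dots> \<le> J * (R\<^sup>2 / 2) + J * ((sqrt (real (Suc m)) + L) / 2 * D\<^sup>2) + R\<^sup>2 * (sqrt (real m) - 1/2)"
    using \<open>J \<ge> 1\<close> last \<open>e \<le> sqrt (real (Suc m)) + L\<close>
    by (intro add_mono mult_left_mono divide_right_mono mult_right_mono) auto
  also have "\<dots> = J * ((sqrt (real (Suc m)) + L) / 2 * D\<^sup>2) + R\<^sup>2 * (J / 2 + sqrt (real m) - 1/2)"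
    by (simp add: algebra_simps)
  also have "\<dots> \<le> J * ((sqrt (real (Suc m)) + L) / 2 * D\<^sup>2) + R\<^sup>2 * (J * sqrt (real (Suc m)))"
    using half_plus_sqrt_le[OF \<open>J \<ge> 1\<close>] by (intro add_left_mono mult_left_mono) auto
  finally show ?thesis
    by (simp add: algebra_simps)
qed

section \<open>Block proximal steps\<close>

lemma inner_blk_proj: "blk_proj B v \<bullet> w = (\<Sum>k\<in>B. v $ k * w $ k)"
proof -
  have "blk_proj B v \<bullet> w = (\<Sum>k\<in>UNIV. if k \<in> B then v $ k * w $ k else 0)"
    unfolding inner_vec_def blk_proj_def by (rule sum.cong) auto
  then show ?thesis
    by (simp add: sum.If_cases)
qed

lemma norm_blk_proj_square: "(norm (blk_proj B v))\<^sup>2 = (\<Sum>k\<in>B. v $ k * v $ k)"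
  unfolding power2_norm_eq_inner inner_blk_proj by (rule sum.cong) (auto simp: blk_proj_def)

lemma closed_block_slice: "closed {y :: real^'n. \<forall>k. k \<notin> B \<longrightarrow> y $ k = z $ k}"
  by (intro closed_Collect_all closed_Collect_imp closed_Collect_eq continuous_intros) auto

lemma convex_block_slice: "convex {y :: real^'n. \<forall>k. k \<notin> B \<longrightarrow> y $ k = z $ k}"
  unfolding convex_def by (auto simp flip: distrib_right)

lemma block_prox_minimizer:
  fixes a z :: "real^'n" and gj :: "real^'n \<Rightarrow> real" and B :: "'n set"
  assumes "convex_on UNIV gj" "\<eta> > 0"
  defines "y \<equiv> arg_min (\<lambda>y. a \<bullet> y + gj y + \<eta>/2 * (norm (y - z))\<^sup>2) (\<lambda>y. \<forall>k. k \<notin> B \<longrightarrow> y $ k = z $ k)"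
  shows "y \<in> {y. \<forall>k. k \<notin> B \<longrightarrow> y $ k = z $ k}"
    and "\<And>u. u \<in> {y. \<forall>k. k \<notin> B \<longrightarrow> y $ k = z $ k} \<Longrightarrow>
           a \<bullet> y + gj y + \<eta>/2 * (norm (y - z))\<^sup>2 \<le> a \<bullet> u + gj u + \<eta>/2 * (norm (u - z))\<^sup>2"
proof -
  let ?S = "{y :: real^'n. \<forall>k. k \<notin> B \<longrightarrow> y $ k = z $ k}"
  let ?\<Phi> = "\<lambda>y. a \<bullet> y + gj y + \<eta>/2 * (norm (y - z))\<^sup>2"
  obtain m where "m \<in> ?S" "\<forall>u\<in>?S. ?\<Phi> m \<le> ?\<Phi> u"
    using prox_minimizer_exists[where S = ?S and z = z,
        OF convex_on_inner_add[OF assms(1), of a] closed_block_slice convex_block_slice _ \<open>\<eta> > 0\<close>]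
    by auto
  then have "is_arg_min ?\<Phi> (\<lambda>y. y \<in> ?S) m"
    by (simp add: is_arg_min_linorder)
  then have "is_arg_min ?\<Phi> (\<lambda>y. y \<in> ?S) y"
    unfolding y_def arg_min_def mem_Collect_eq by (rule someI)
  then show "y \<in> ?S" "\<And>u. u \<in> ?S \<Longrightarrow> ?\<Phi> y \<le> ?\<Phi> u"
    by (auto simp: is_arg_min_linorder)
qed

lemma block_prox_descent:
  fixes c z xs :: "real^'n" and gj :: "real^'n \<Rightarrow> real"
  assumes cvx: "convex_on UNIV gj" and "\<eta> > 0"
    and gj_block: "\<forall>x y. (\<forall>k\<in>B. x $ k = y $ k) \<longrightarrow> gj x = gj y"
  defines "y \<equiv> arg_min (\<lambda>y. blk_proj B c \<bullet> y + gj y + \<eta>/2 * (norm (y - z))\<^sup>2)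
                       (\<lambda>y. \<forall>k. k \<notin> B \<longrightarrow> y $ k = z $ k)"
  shows "\<forall>k. k \<notin> B \<longrightarrow> y $ k = z $ k"
    and "blk_proj B c \<bullet> (z - xs) + gj y - gj xs
           \<le> \<eta>/2 * ((norm (xs - z))\<^sup>2 - (norm (xs - y))\<^sup>2) + (norm (blk_proj B c))\<^sup>2 / (2 * \<eta>)"
proof -
  let ?S = "{y :: real^'n. \<forall>k. k \<notin> B \<longrightarrow> y $ k = z $ k}"
  define h where "h y = blk_proj B c \<bullet> y + gj y" for y
  note minimizer = block_prox_minimizer[where a = "blk_proj B c" and z = z and B = B,
      OF cvx \<open>\<eta> > 0\<close>, folded y_def h_def]
  then show "\<forall>k. k \<notin> B \<longrightarrow> y $ k = z $ k"
    by simp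
  define w where "w = (\<chi> k. if k \<in> B then xs $ k else z $ k)"
  have "w \<in> ?S"
    by (simp add: w_def)
  have three_point: "h y + \<eta>/2 * (norm (y - z))\<^sup>2 + \<eta>/2 * (norm (w - y))\<^sup>2 \<le> h w + \<eta>/2 * (norm (w - z))\<^sup>2"
    using prox_three_point[OF _ minimizer(1) \<open>w \<in> ?S\<close> _ minimizer(2)] \<open>\<eta> > 0\<close>
      convex_on_subset[OF convex_on_inner_add[OF cvx] _ convex_block_slice]
    unfolding h_def by auto
  have "gj w = gj xs"
    using gj_block by (simp add: w_def)
  moreover have "blk_proj B c \<bullet> w = blk_proj B c \<bullet> xs"
    unfolding inner_blk_proj by (rule sum.cong) (auto simp: w_def)
  moreover have "(norm (xs - z))\<^sup>2 - (norm (xs - y))\<^sup>2 = (norm (w - z))\<^sup>2 - (norm (w - y))\<^sup>2"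
    unfolding power2_norm_eq_inner inner_vec_def sum_subtractf[symmetric]
    by (rule sum.cong) (use minimizer(1) in \<open>auto simp: w_def\<close>)
  then have "\<eta>/2 * ((norm (xs - z))\<^sup>2 - (norm (xs - y))\<^sup>2) = \<eta>/2 * (norm (w - z))\<^sup>2 - \<eta>/2 * (norm (w - y))\<^sup>2"
    by (simp add: right_diff_distrib)
  moreover have "blk_proj B c \<bullet> (z - y) \<le> (norm (blk_proj B c))\<^sup>2 / (2 * \<eta>) + \<eta>/2 * (norm (y - z))\<^sup>2"
    using young_inner_le[OF \<open>\<eta> > 0\<close>, of _ "z - y"] by (simp add: norm_minus_commute)
  ultimately show "blk_proj B c \<bullet> (z - xs) + gj y - gj xs
      \<le> \<eta>/2 * ((norm (xs - z))\<^sup>2 - (norm (xs - y))\<^sup>2) + (norm (blk_proj B c))\<^sup>2 / (2 * \<eta>)"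
    using three_point unfolding h_def inner_diff_right by linarith
qed

lemma block_Lipschitz_const_nonneg:
  fixes G :: "real^'n \<Rightarrow> real^'n"
  assumes "k \<in> B"
    and lip: "\<forall>x h. (\<forall>k. k \<notin> B \<longrightarrow> h $ k = 0) \<longrightarrow>
                norm (blk_proj B (G (x + h)) - blk_proj B (G x)) \<le> c * norm h"
  shows "c \<ge> 0"
proof -
  have "\<forall>k'. k' \<notin> B \<longrightarrow> axis k (1::real) $ k' = 0"
    using \<open>k \<in> B\<close> by (auto simp: axis_def)
  then have "0 \<le> c * norm (axis k (1::real))"
    using lip order_trans[OF norm_ge_zero] by blast
  then show ?thesis
    by (simp add: zero_le_mult_iff)
qed

lemma orbcd_iter_cong:
  "(\<And>t. t < k \<Longrightarrow> h t = h' t) \<Longrightarrow> orbcd_iter gf g blk L h k = orbcd_iter gf g blk L h' k"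
  by (induction k) auto

section \<open>Expected descent of ORBCD\<close>

locale block_composite_problem =
  fixes f :: "nat \<Rightarrow> real^'n \<Rightarrow> real" and gf :: "nat \<Rightarrow> real^'n \<Rightarrow> real^'n"
    and g :: "nat \<Rightarrow> real^'n \<Rightarrow> real" and blk :: "nat \<Rightarrow> 'n set" and I J :: nat
  assumes I_pos: "I \<ge> 1"
    and blk_disj: "\<And>j j'. j \<in> {1..J} \<Longrightarrow> j' \<in> {1..J} \<Longrightarrow> j \<noteq> j' \<Longrightarrow> blk j \<inter> blk j' = {}"
    and blk_cover: "(\<Union>j\<in>{1..J}. blk j) = UNIV"
    and f_convex: "\<And>i. i \<in> {1..I} \<Longrightarrow> convex_on UNIV (f i)"
    and f_grad: "\<And>i x. i \<in> {1..I} \<Longrightarrow> (f i has_derivative (\<lambda>h. gf i x \<bullet> h)) (at x)"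
    and g_convex: "\<And>j. j \<in> {1..J} \<Longrightarrow> convex_on UNIV (g j)"
    and g_block: "\<And>j x y. j \<in> {1..J} \<Longrightarrow> \<forall>k\<in>blk j. x $ k = y $ k \<Longrightarrow> g j x = g j y"
begin

definition regularizer :: "real^'n \<Rightarrow> real" where
  "regularizer x = (\<Sum>j\<in>{1..J}. g j x)"

definition objective :: "real^'n \<Rightarrow> real" where
  "objective x = (1 / real I) * (\<Sum>i\<in>{1..I}. f i x) + regularizer x"

text \<open>The amount by which a step \<open>z \<mapsto> y\<close> violates the one-step descent estimate
  \<open>F z - F x\<^sub>s \<le> J (G z - G y) + J \<eta>/2 (\<parallel>x\<^sub>s - z\<parallel>\<^sup>2 - \<parallel>x\<^sub>s - y\<parallel>\<^sup>2) + R\<^sup>2/(2\<eta>)\<close>, where \<open>F\<close> is the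
  objective and \<open>G\<close> the regularizer; the factor \<open>J\<close> compensates for updating a single block.\<close>
definition descent_gap :: "real \<Rightarrow> real \<Rightarrow> real^'n \<Rightarrow> real^'n \<Rightarrow> real^'n \<Rightarrow> real" where
  "descent_gap R \<eta> xs z y = objective z - objective xs - real J * (regularizer z - regularizer y)
     - real J * \<eta> / 2 * ((norm (xs - z))\<^sup>2 - (norm (xs - y))\<^sup>2) - R\<^sup>2 / (2 * \<eta>)"

lemma J_pos: "J \<ge> 1"
proof (rule ccontr)
  assume "\<not> J \<ge> 1"
  then show False
    using blk_cover by simp
qed

lemma sum_over_blocks: "(\<Sum>j\<in>{1..J}. \<Sum>k\<in>blk j. a k) = (\<Sum>k\<in>UNIV. a k)"
proof -
  have "(\<Sum>k\<in>(\<Union>j\<in>{1..J}. blk j). a k) = (\<Sum>j\<in>{1..J}. \<Sum>k\<in>blk j. a k)"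
    using blk_disj by (intro sum.UNION_disjoint) auto
  then show ?thesis
    unfolding blk_cover by simp
qed

lemma sum_inner_blk_proj: "(\<Sum>j\<in>{1..J}. blk_proj (blk j) v \<bullet> w) = v \<bullet> w"
  by (simp only: inner_blk_proj sum_over_blocks) (simp add: inner_vec_def)

lemma sum_norm_blk_proj_square: "(\<Sum>j\<in>{1..J}. (norm (blk_proj (blk j) v))\<^sup>2) = (norm v)\<^sup>2"
  by (simp only: norm_blk_proj_square sum_over_blocks) (simp add: power2_norm_eq_inner inner_vec_def)

lemma regularizer_block_update:
  assumes "j \<in> {1..J}" and "\<forall>k. k \<notin> blk j \<longrightarrow> y $ k = z $ k"
  shows "regularizer y - regularizer z = g j y - g j z"
proof -
  have "g j' y = g j' z" if "j' \<in> {1..J}" "j' \<noteq> j" for j'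
    using that assms blk_disj[of j' j] by (intro g_block) auto
  then have "(\<Sum>j'\<in>{1..J}. g j' y - g j' z) = (\<Sum>j'\<in>{1..J}. if j' = j then g j y - g j z else 0)"
    by (intro sum.cong) auto
  then show ?thesis
    using assms(1) by (simp add: regularizer_def sum_subtractf)
qed

lemma orbcd_step_descent:
  fixes i :: nat and z xs :: "real^'n"
  assumes "j \<in> {1..J}" "\<eta> > 0"
  defines "c \<equiv> blk_proj (blk j) (gf i z)" and "y \<equiv> orbcd_step gf g blk \<eta> z (i, j)"
  shows "regularizer y - regularizer z
           \<le> g j xs - g j z + \<eta>/2 * ((norm (xs - z))\<^sup>2 - (norm (xs - y))\<^sup>2) + (norm c)\<^sup>2 / (2 * \<eta>) - c \<bullet> (z - xs)"
proof -
  have y: "y = arg_min (\<lambda>y. c \<bullet> y + g j y + \<eta>/2 * (norm (y - z))\<^sup>2) (\<lambda>y. \<forall>k. k \<notin> blk j \<longrightarrow> y $ k = z $ k)"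
    by (simp add: y_def c_def orbcd_step_def)
  have block: "\<forall>x y. (\<forall>k\<in>blk j. x $ k = y $ k) \<longrightarrow> g j x = g j y"
    using g_block[OF \<open>j \<in> {1..J}\<close>] by blast
  note descent = block_prox_descent[OF g_convex[OF \<open>j \<in> {1..J}\<close>] \<open>\<eta> > 0\<close> block,
      where c = "gf i z" and z = z, folded c_def]
  show ?thesis
    using regularizer_block_update[OF \<open>j \<in> {1..J}\<close> descent(1)] descent(2)[where xs = xs]
    unfolding y by linarith
qed

lemma mean_descent_gap_nonpos:
  assumes "\<eta> > 0" and grad_bound: "\<And>i. i \<in> {1..I} \<Longrightarrow> norm (gf i z) \<le> R"
  shows "(\<Sum>ij\<in>{1..I} \<times> {1..J}. descent_gap R \<eta> xs z (orbcd_step gf g blk \<eta> z ij)) \<le> 0"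
proof -
  define \<Delta> where "\<Delta> = objective z - objective xs"
  define c where "c i j = blk_proj (blk j) (gf i z)" for i j
  define U where "U i j = \<Delta> + real J * (g j xs - g j z) + real J * (norm (c i j))\<^sup>2 / (2 * \<eta>)
      - real J * (c i j \<bullet> (z - xs)) - R\<^sup>2 / (2 * \<eta>)" for i j
  have gap_le: "descent_gap R \<eta> xs z (orbcd_step gf g blk \<eta> z (i, j)) \<le> U i j" if "j \<in> {1..J}" for i j
    using mult_left_mono[OF orbcd_step_descent[OF that \<open>\<eta> > 0\<close>, where i = i and z = z and xs = xs], of "real J"]
    unfolding descent_gap_def U_def \<Delta>_def c_def by (simp add: algebra_simps)
  have sum_U: "(\<Sum>j\<in>{1..J}. U i j) = real J * (\<Delta> + regularizer xs - regularizer z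
      - gf i z \<bullet> (z - xs) + ((norm (gf i z))\<^sup>2 - R\<^sup>2) / (2 * \<eta>))" for i
    unfolding U_def c_def sum.distrib sum_subtractf sum_divide_distrib[symmetric]
      sum_distrib_left[symmetric] sum_inner_blk_proj sum_norm_blk_proj_square
    by (simp add: regularizer_def sum_subtractf algebra_simps diff_divide_distrib)
  have "real I * (\<Delta> + regularizer xs - regularizer z) = (\<Sum>i\<in>{1..I}. f i z - f i xs)"
    using I_pos by (simp add: \<Delta>_def objective_def sum_subtractf algebra_simps)
  then have "(\<Sum>i\<in>{1..I}. \<Sum>j\<in>{1..J}. U i j) = real J * (\<Sum>i\<in>{1..I}.
      f i z - f i xs - gf i z \<bullet> (z - xs) + ((norm (gf i z))\<^sup>2 - R\<^sup>2) / (2 * \<eta>))"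
    unfolding sum_U by (simp add: sum_distrib_left[symmetric] sum.distrib sum_subtractf)
  also have "\<dots> \<le> 0"
  proof (intro mult_nonneg_nonpos sum_nonpos)
    fix i assume "i \<in> {1..I}"
    have "f i z + gf i z \<bullet> (xs - z) \<le> f i xs"
      using convex_on_gradient_inequality[OF f_convex f_grad] \<open>i \<in> {1..I}\<close> by blast
    moreover have "(norm (gf i z))\<^sup>2 \<le> R\<^sup>2"
      using grad_bound[OF \<open>i \<in> {1..I}\<close>] by (intro power_mono) auto
    then have "((norm (gf i z))\<^sup>2 - R\<^sup>2) / (2 * \<eta>) \<le> 0"
      using \<open>\<eta> > 0\<close> by (intro divide_nonpos_pos) auto
    ultimately show "f i z - f i xs - gf i z \<bullet> (z - xs) + ((norm (gf i z))\<^sup>2 - R\<^sup>2) / (2 * \<eta>) \<le> 0"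
      unfolding inner_diff_right by linarith
  qed simp
  finally have "(\<Sum>i\<in>{1..I}. \<Sum>j\<in>{1..J}. U i j) \<le> 0" .
  moreover have "(\<Sum>i\<in>{1..I}. \<Sum>j\<in>{1..J}. descent_gap R \<eta> xs z (orbcd_step gf g blk \<eta> z (i, j)))
      \<le> (\<Sum>i\<in>{1..I}. \<Sum>j\<in>{1..J}. U i j)"
    using gap_le by (intro sum_mono) auto
  ultimately show ?thesis
    by (simp add: sum.cartesian_product)
qed

lemma objective_convex: "convex_on UNIV objective"
  unfolding objective_def regularizer_def
  by (intro convex_on_add convex_on_cmul convex_on_sum_fun f_convex g_convex) auto

lemma last_iterate_gap:
  assumes grad_bound: "\<And>i. i \<in> {1..I} \<Longrightarrow> norm (gf i z) \<le> R"
    and "objective xs \<le> objective z"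
  shows "objective z - objective xs - real J * (regularizer z - regularizer xs) \<le> real J * (R * norm (xs - z))"
proof -
  define a where "a = (1 / real I) * (\<Sum>i\<in>{1..I}. f i z - f i xs)"
  define b where "b = regularizer z - regularizer xs"
  have "f i z - f i xs \<le> R * norm (xs - z)" if "i \<in> {1..I}" for i
  proof -
    have "f i z - f i xs \<le> gf i z \<bullet> (z - xs)"
      using convex_on_gradient_inequality[OF f_convex[OF that] f_grad[OF that, of z], where x = xs]
      by (simp add: inner_diff_right)
    also have "\<dots> \<le> norm (gf i z) * norm (xs - z)"
      using norm_cauchy_schwarz[of "gf i z" "z - xs"] by (simp add: norm_minus_commute)
    also have "\<dots> \<le> R * norm (xs - z)"
      using grad_bound[OF that] by (intro mult_right_mono) auto
    finally show ?thesis .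
  qed
  then have "(\<Sum>i\<in>{1..I}. f i z - f i xs) \<le> real I * (R * norm (xs - z))"
    using sum_mono[of "{1..I}" "\<lambda>i. f i z - f i xs" "\<lambda>_. R * norm (xs - z)"] by simp
  then have "a \<le> R * norm (xs - z)"
    using I_pos by (simp add: a_def divide_le_eq mult.commute)
  moreover have split: "objective z - objective xs = a + b"
    by (simp add: a_def b_def objective_def sum_subtractf right_diff_distrib)
  then have "0 \<le> a + b"
    using \<open>objective xs \<le> objective z\<close> by linarith
  \<comment> \<open>the slack of the claim is \<open>(J - 1)(a + b) + J (R \<parallel>xs - z\<parallel> - a)\<close>\<close>
  ultimately have "0 \<le> (real J - 1) * (a + b)" "0 \<le> real J * (R * norm (xs - z) - a)"
    using J_pos by simp_all
  then show ?thesis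
    unfolding split b_def by (simp add: algebra_simps)
qed

lemma sum_objective_le_sum_descent_gap:
  fixes x :: "nat \<Rightarrow> real^'n"
  assumes "L \<ge> 0" and dist_bound: "\<And>k. k \<le> m \<Longrightarrow> norm (xs - x k) \<le> D"
    and grad_bound: "\<And>i. i \<in> {1..I} \<Longrightarrow> norm (gf i (x m)) \<le> R"
    and "objective xs \<le> objective (x m)"
  defines "\<eta> k \<equiv> sqrt (real (Suc k)) + L"
  shows "(\<Sum>k<Suc m. objective (x k))
      \<le> (\<Sum>k<m. descent_gap R (\<eta> k) xs (x k) (x (Suc k)))
        + real J * ((sqrt (real (Suc m)) + L) / 2 * D\<^sup>2 + sqrt (real (Suc m)) * R\<^sup>2
          + regularizer (x 0) - regularizer xs) + real (Suc m) * objective xs"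
proof -
  define \<delta> where "\<delta> k = norm (xs - x k)" for k
  have "(\<Sum>k<m. descent_gap R (\<eta> k) xs (x k) (x (Suc k)))
      = (\<Sum>k<m. objective (x k)) - real m * objective xs
        - real J * (\<Sum>k<m. regularizer (x k) - regularizer (x (Suc k)))
        - real J / 2 * (\<Sum>k<m. \<eta> k * ((\<delta> k)\<^sup>2 - (\<delta> (Suc k))\<^sup>2)) - R\<^sup>2 * (\<Sum>k<m. 1 / (2 * \<eta> k))"
    unfolding descent_gap_def \<delta>_def
    by (simp add: sum_subtractf sum_distrib_left sum_divide_distrib mult.assoc right_diff_distrib)
  also have "(\<Sum>k<m. regularizer (x k) - regularizer (x (Suc k))) = regularizer (x 0) - regularizer (x m)"
    by (rule sum_lessThan_telescope')
  finally have sum_gap: "(\<Sum>k<m. descent_gap R (\<eta> k) xs (x k) (x (Suc k)))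
      = (\<Sum>k<m. objective (x k)) - real m * objective xs
        - real J * (regularizer (x 0) - regularizer (x m))
        - real J / 2 * (\<Sum>k<m. \<eta> k * ((\<delta> k)\<^sup>2 - (\<delta> (Suc k))\<^sup>2)) - R\<^sup>2 * (\<Sum>k<m. 1 / (2 * \<eta> k))" .
  have "0 \<le> R"
    using grad_bound[of 1] I_pos by (simp add: order_trans[OF norm_ge_zero])
  have last: "objective (x m) - objective xs - real J * (regularizer (x m) - regularizer xs)
      \<le> real J * R * \<delta> m"
    using last_iterate_gap[OF grad_bound \<open>objective xs \<le> objective (x m)\<close>] by (simp add: \<delta>_def)
  have "real J * R * \<delta> m + real J / 2 * (\<Sum>k<m. \<eta> k * ((\<delta> k)\<^sup>2 - (\<delta> (Suc k))\<^sup>2))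
        + R\<^sup>2 * (\<Sum>k<m. 1 / (2 * \<eta> k))
      \<le> real J * ((sqrt (real (Suc m)) + L) / 2 * D\<^sup>2 + sqrt (real (Suc m)) * R\<^sup>2)"
    unfolding \<eta>_def using \<open>L \<ge> 0\<close> \<open>0 \<le> R\<close> J_pos dist_bound
    by (intro sqrt_step_schedule_bound) (auto simp: \<delta>_def)
  with sum_gap last show ?thesis
    by (simp add: algebra_simps)
qed

lemma orbcd_iter_on_support:
  assumes "h \<in> set_pmf (Pi_pmf {..<n} d (\<lambda>_. pmf_of_set ({1..I} \<times> {1..J})))"
  obtains h' where "\<forall>t. h' t \<in> {1..I} \<times> {1..J}"
    and "\<And>k. k \<le> n \<Longrightarrow> orbcd_iter gf g blk L h k = orbcd_iter gf g blk L h' k"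
proof
  define h' where "h' t = (if t < n then h t else (1, 1))" for t
  have "(1, 1) \<in> {1..I} \<times> {1..J}"
    using I_pos J_pos by auto
  moreover have "h t \<in> {1..I} \<times> {1..J}" if "t < n" for t
    using assms that I_pos J_pos by (auto simp: set_Pi_pmf PiE_dflt_def)
  ultimately show "\<forall>t. h' t \<in> {1..I} \<times> {1..J}"
    by (simp add: h'_def)
  show "orbcd_iter gf g blk L h k = orbcd_iter gf g blk L h' k" if "k \<le> n" for k
    using that by (intro orbcd_iter_cong) (simp add: h'_def)
qed

lemma expected_descent_gap_nonpos:
  assumes "L \<ge> 0" "k < n"
    and grad_bound: "\<And>h t i. \<forall>t. h t \<in> {1..I} \<times> {1..J} \<Longrightarrow> i \<in> {1..I} \<Longrightarrow>
                       norm (gf i (orbcd_iter gf g blk L h t)) \<le> R"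
  shows "measure_pmf.expectation (Pi_pmf {..<n} d (\<lambda>_. pmf_of_set ({1..I} \<times> {1..J})))
           (\<lambda>h. descent_gap R (sqrt (real (Suc k)) + L) xs
                  (orbcd_iter gf g blk L h k) (orbcd_iter gf g blk L h (Suc k))) \<le> 0"
proof (rule expectation_Pi_pmf_nonpos_by_resampling)
  \<comment> \<open>the \<open>k\<close>-th iterate does not depend on the \<open>k\<close>-th choice, so resampling that choice
    averages the step from it over all pairs \<open>(i, j)\<close>\<close>
  fix h assume h: "h \<in> set_pmf (Pi_pmf {..<n} d (\<lambda>_. pmf_of_set ({1..I} \<times> {1..J})))"
  define z where "z = orbcd_iter gf g blk L h k"
  define \<eta> where "\<eta> = sqrt (real (Suc k)) + L"
  obtain h' where "\<forall>t. h' t \<in> {1..I} \<times> {1..J}" and "z = orbcd_iter gf g blk L h' k"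
    using orbcd_iter_on_support[OF h] \<open>k < n\<close> unfolding z_def by (metis less_imp_le)
  then have "norm (gf i z) \<le> R" if "i \<in> {1..I}" for i
    using grad_bound that by blast
  moreover have "\<eta> > 0"
    using \<open>L \<ge> 0\<close> by (simp add: \<eta>_def add_pos_nonneg)
  moreover have "orbcd_iter gf g blk L (h(k := y)) k = z" for y
    unfolding z_def by (rule orbcd_iter_cong) simp
  ultimately show "(\<Sum>y\<in>{1..I} \<times> {1..J}. descent_gap R (sqrt (real (Suc k)) + L) xs
      (orbcd_iter gf g blk L (h(k := y)) k) (orbcd_iter gf g blk L (h(k := y)) (Suc k))) \<le> 0"
    using mean_descent_gap_nonpos[of \<eta> z R xs] by (simp add: \<eta>_def)
qed (use assms I_pos J_pos in auto)

lemma sum_objective_iterates_le: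
  assumes "L \<ge> 0" and h: "h \<in> set_pmf (Pi_pmf {..<m} d (\<lambda>_. pmf_of_set ({1..I} \<times> {1..J})))"
    and grad_bound: "\<And>h t i. \<forall>t. h t \<in> {1..I} \<times> {1..J} \<Longrightarrow> i \<in> {1..I} \<Longrightarrow>
                       norm (gf i (orbcd_iter gf g blk L h t)) \<le> R"
    and dist_bound: "\<And>h t. \<forall>t. h t \<in> {1..I} \<times> {1..J} \<Longrightarrow> norm (xs - orbcd_iter gf g blk L h t) \<le> D"
    and xs_min: "\<And>y. objective xs \<le> objective y"
  shows "(\<Sum>k<Suc m. objective (orbcd_iter gf g blk L h k))
      \<le> (\<Sum>k<m. descent_gap R (sqrt (real (Suc k)) + L) xs
              (orbcd_iter gf g blk L h k) (orbcd_iter gf g blk L h (Suc k)))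
        + real J * ((sqrt (real (Suc m)) + L) / 2 * D\<^sup>2 + sqrt (real (Suc m)) * R\<^sup>2
          + regularizer 0 - regularizer xs) + real (Suc m) * objective xs"
proof -
  let ?x = "orbcd_iter gf g blk L"
  obtain h' where h': "\<forall>t. h' t \<in> {1..I} \<times> {1..J}" and same: "\<And>k. k \<le> m \<Longrightarrow> ?x h k = ?x h' k"
    using orbcd_iter_on_support[OF h] by blast
  have "(\<Sum>k<Suc m. objective (?x h k)) = (\<Sum>k<Suc m. objective (?x h' k))"
    "(\<Sum>k<m. descent_gap R (sqrt (real (Suc k)) + L) xs (?x h k) (?x h (Suc k)))
      = (\<Sum>k<m. descent_gap R (sqrt (real (Suc k)) + L) xs (?x h' k) (?x h' (Suc k)))"
    by (auto simp: same Suc_leI simp del: orbcd_iter.simps intro!: sum.cong)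
  then show ?thesis
    using sum_objective_le_sum_descent_gap[where x = "?x h'" and m = m and D = D and R = R,
        OF \<open>L \<ge> 0\<close> dist_bound[OF h'] grad_bound[OF h'] xs_min]
    by simp
qed

lemma expected_objective_average_le:
  fixes T :: nat and L R D :: real and xs :: "real^'n" and d :: "nat \<times> nat"
  assumes "T \<ge> 1" "L \<ge> 0"
    and grad_bound: "\<And>h t i. \<forall>t. h t \<in> {1..I} \<times> {1..J} \<Longrightarrow> i \<in> {1..I} \<Longrightarrow>
                       norm (gf i (orbcd_iter gf g blk L h t)) \<le> R"
    and dist_bound: "\<And>h t. \<forall>t. h t \<in> {1..I} \<times> {1..J} \<Longrightarrow> norm (xs - orbcd_iter gf g blk L h t) \<le> D"
    and xs_min: "\<And>y. objective xs \<le> objective y"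
  defines "P \<equiv> Pi_pmf {..<T - 1} d (\<lambda>_. pmf_of_set ({1..I} \<times> {1..J}))"
    and "C \<equiv> real J * ((sqrt (real T) + L) / 2 * D\<^sup>2 + sqrt (real T) * R\<^sup>2 + regularizer 0 - regularizer xs)"
  shows "measure_pmf.expectation P
           (\<lambda>h. objective ((1 / real T) *\<^sub>R (\<Sum>k<T. orbcd_iter gf g blk L h k)))
         \<le> objective xs + C / real T"
proof -
  obtain m where m: "T = Suc m"
    using \<open>T \<ge> 1\<close> by (cases T) auto
  let ?x = "orbcd_iter gf g blk L"
  define gap where "gap k = (\<lambda>h. descent_gap R (sqrt (real (Suc k)) + L) xs (?x h k) (?x h (Suc k)))" for k
  have fin: "finite (set_pmf P)"
    unfolding P_def using I_pos J_pos by (intro finite_set_Pi_pmf) auto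
  have "measure_pmf.expectation P (\<lambda>h. objective ((1 / real T) *\<^sub>R (\<Sum>k<T. ?x h k)))
      \<le> measure_pmf.expectation P (\<lambda>h. (1 / real T) * ((\<Sum>k<m. gap k h) + C + real T * objective xs))"
  proof (intro integral_mono_AE integrable_measure_pmf_finite[OF fin] AE_pmfI)
    fix h assume "h \<in> set_pmf P"
    then have "(1 / real T) * (\<Sum>k<T. objective (?x h k))
        \<le> (1 / real T) * ((\<Sum>k<m. gap k h) + C + real T * objective xs)"
      using sum_objective_iterates_le[OF \<open>L \<ge> 0\<close> _ grad_bound dist_bound xs_min]
      unfolding P_def gap_def C_def m by (intro mult_left_mono) auto
    with convex_on_average_le[OF objective_convex \<open>T \<ge> 1\<close>]
    show "objective ((1 / real T) *\<^sub>R (\<Sum>k<T. ?x h k))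
        \<le> (1 / real T) * ((\<Sum>k<m. gap k h) + C + real T * objective xs)"
      by (rule order_trans)
  qed
  also have "\<dots> = (1 / real T) * ((\<Sum>k<m. measure_pmf.expectation P (gap k)) + C + real T * objective xs)"
    by (simp add: integrable_measure_pmf_finite[OF fin])
  also have "\<dots> \<le> (1 / real T) * (C + real T * objective xs)"
  proof -
    have "measure_pmf.expectation P (gap k) \<le> 0" if "k < m" for k
      unfolding P_def m diff_Suc_1 gap_def by (rule expected_descent_gap_nonpos[OF \<open>L \<ge> 0\<close> that grad_bound])
    then show ?thesis
      by (intro mult_left_mono add_right_mono) (auto intro: sum_nonpos)
  qed
  also have "\<dots> = objective xs + C / real T"
    using \<open>T \<ge> 1\<close> by (simp add: field_simps)
  finally show ?thesis .
qed

end

theorem theorem3: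
  fixes f :: "nat \<Rightarrow> real^'n \<Rightarrow> real"
    and gf :: "nat \<Rightarrow> real^'n \<Rightarrow> real^'n"
    and g :: "nat \<Rightarrow> real^'n \<Rightarrow> real"
    and blk :: "nat \<Rightarrow> 'n set"
    and I J T :: nat
    and Lj :: "nat \<Rightarrow> real"
    and Rf D :: real
    and X :: "(real^'n) set"
    and xstar :: "real^'n"
  assumes I_pos: "I \<ge> 1" and J_pos: "J \<ge> 1" and T_pos: "T \<ge> 1"
    and blk_nonempty: "\<forall>j\<in>{1..J}. blk j \<noteq> {}"
    and blk_disj: "\<forall>j\<in>{1..J}. \<forall>j'\<in>{1..J}. j \<noteq> j' \<longrightarrow> blk j \<inter> blk j' = {}"
    and blk_cover: "(\<Union>j\<in>{1..J}. blk j) = UNIV"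
    and f_convex: "\<forall>i\<in>{1..I}. convex_on UNIV (f i)"
    and f_grad: "\<forall>i\<in>{1..I}. \<forall>x. (f i has_derivative (\<lambda>h. gf i x \<bullet> h)) (at x)"
    and g_convex: "\<forall>j\<in>{1..J}. convex_on UNIV (g j)"
    and g_block: "\<forall>j\<in>{1..J}. \<forall>x y. (\<forall>k\<in>blk j. x $ k = y $ k) \<longrightarrow> g j x = g j y"
    and xstar_min: "\<forall>y. (1 / real I) * (\<Sum>i\<in>{1..I}. f i xstar) + (\<Sum>j\<in>{1..J}. g j xstar)
                       \<le> (1 / real I) * (\<Sum>i\<in>{1..I}. f i y) + (\<Sum>j\<in>{1..J}. g j y)"
    and blk_lip: "\<forall>i\<in>{1..I}. \<forall>j\<in>{1..J}. \<forall>x h. (\<forall>k. k \<notin> blk j \<longrightarrow> h $ k = 0) \<longrightarrow>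
          norm (blk_proj (blk j) (gf i (x + h)) - blk_proj (blk j) (gf i x)) \<le> Lj j * norm h"
    and grad_bound: "\<forall>h. (\<forall>k. h k \<in> {1..I} \<times> {1..J}) \<longrightarrow> (\<forall>t. \<forall>i\<in>{1..I}.
          norm (gf i (orbcd_iter gf g blk (Max (Lj ` {1..J})) h t)) \<le> Rf)"
    and iter_in_X: "\<forall>h. (\<forall>k. h k \<in> {1..I} \<times> {1..J}) \<longrightarrow>
          (\<forall>t. orbcd_iter gf g blk (Max (Lj ` {1..J})) h t \<in> X)"
    and xstar_in_X: "xstar \<in> X"
    and X_bounded: "bounded X" and X_diam: "diameter X = D"
  shows "\<forall>x. measure_pmf.expectation
              (Pi_pmf {..<T - 1} undefined (\<lambda>_. pmf_of_set ({1..I} \<times> {1..J})))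
              (\<lambda>h. let xbar = (1 / real T) *\<^sub>R (\<Sum>k<T. orbcd_iter gf g blk (Max (Lj ` {1..J})) h k)
                   in (1 / real I) * (\<Sum>i\<in>{1..I}. f i xbar) + (\<Sum>j\<in>{1..J}. g j xbar))
            - ((1 / real I) * (\<Sum>i\<in>{1..I}. f i x) + (\<Sum>j\<in>{1..J}. g j x))
          \<le> real J * ((sqrt (real T) + Max (Lj ` {1..J})) / 2 * D\<^sup>2 + sqrt (real T) * Rf\<^sup>2
                + (\<Sum>j\<in>{1..J}. g j 0) - (\<Sum>j\<in>{1..J}. g j xstar)) / real T"
proof -
  interpret block_composite_problem f gf g blk I J
    using I_pos blk_disj blk_cover f_convex f_grad g_convex g_block by unfold_locales auto
  define L where "L = Max (Lj ` {1..J})"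
  have "L \<ge> 0"
  proof -
    obtain k where "k \<in> blk 1"
      using blk_nonempty J_pos by fastforce
    then have "Lj 1 \<ge> 0"
      using blk_lip I_pos J_pos by (intro block_Lipschitz_const_nonneg[of k "blk 1" "gf 1"]) auto
    also have "Lj 1 \<le> L"
      unfolding L_def using J_pos by (intro Max_ge) auto
    finally show ?thesis .
  qed
  moreover have "norm (xstar - orbcd_iter gf g blk L h t) \<le> D" if "\<forall>t. h t \<in> {1..I} \<times> {1..J}" for h t
    using diameter_bounded_bound[OF X_bounded xstar_in_X] iter_in_X that X_diam
    by (simp add: L_def dist_norm)
  ultimately have "measure_pmf.expectation (Pi_pmf {..<T - 1} undefined (\<lambda>_. pmf_of_set ({1..I} \<times> {1..J})))
      (\<lambda>h. objective ((1 / real T) *\<^sub>R (\<Sum>k<T. orbcd_iter gf g blk L h k)))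
    \<le> objective xstar + real J * ((sqrt (real T) + L) / 2 * D\<^sup>2 + sqrt (real T) * Rf\<^sup>2
          + regularizer 0 - regularizer xstar) / real T"
    using grad_bound xstar_min unfolding L_def
    by (intro expected_objective_average_le[OF T_pos]) (auto simp: objective_def regularizer_def)
  then show ?thesis
    using xstar_min unfolding objective_def regularizer_def Let_def L_def by (smt (verit))
qed

end
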